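(* Let $L(\mathbf{w})=\frac1n\sum_{k=1}^Kn_kL_k(\mathbf{w})$ be the global loss over $K$ devices with $n_k\ge1$ samples, $n=\sum_kn_k$, with $\mathbf{w}^*$ its optimal model. Assume (i) $\nabla L$ is Lipschitz continuous with modulus $\ell>0$, and (ii) $L$ is $\mu$-strongly convex with $\mu>0$: $L(\mathbf{u})\ge L(\mathbf{v})+\nabla L(\mathbf{v})^\top(\mathbf{u}-\mathbf{v})+\frac\mu2\|\mathbf{u}-\mathbf{v}\|^2$ for all $\mathbf{u},\mathbf{v}$. Starting from $\mathbf{w}^1$, in each round $i=1,2,\dots$ let $\mathbf{g}_k^i=\nabla L_k(\mathbf{w}^i)$ (assumed nonzero), draw a device $X^i$ with probabilities $$p_k^{i*}=\frac{n_k}{n}\|\mathbf{g}_k^i\|\sqrt{\frac{\rho}{(1-\rho)T_k^{\mathrm{U},i}+\lambda^{i*}}},$$ where $\rho\in(0,1]$, $T_k^{\mathrm{U},i}=\frac{qS}{B\log_2(1+\gamma_k^i)}$ and $\lambda^{i*}$ is chosen so that $\sum_kp_k^{i*}=1$, and update $\mathbf{w}^{i+1}=\mathbf{w}^i-\eta^i\frac{n_{X^i}}{np^{i*}_{X^i}}\mathbf{g}^i_{X^i}$ with learning rates $0<\eta^i<\frac1{2\mu}$. Then for every $t\ge1$, $$\mathbb{E}\{L(\mathbf{w}^{t+1})-L(\mathbf{w}^* )\}\le\prod_{i=1}^t(1-2\mu\eta^i)\,\mathbb{E}\{L(\mathbf{w}^1)-L(\mathbf{w}^* )\}+\frac{\ell}{2n}\sum_{i=1}^tA^i(\eta^i)^2\sum_{k=1}^Kn_k\|\mathbf{g}_k^i\|\sqrt{\frac{(1-\rho)T_k^{\mathrm{U},i}+\lambda^{i*}}{\rho}},$$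 where $A^i=\prod_{j=i+1}^t(1-2\mu\eta^j)$.
   Context: $S$ is the number of model parameters, $q$ the number of bits per gradient element, $B$ the system bandwidth, $\gamma_k^i>0$ the uplink SNR of device $k$ in round $i$; $T_k^{\mathrm{U},i}$ is device $k$'s gradient upload latency. The probabilities $p_k^{i*}$ are the importance- and channel-aware scheduling policy minimizing, over distributions $(p_k)$, $\sum_k p_k\big(\rho\|\frac{n_k}{np_k}\mathbf{g}_k^i-\nabla L(\mathbf{w}^i)\|^2+(1-\rho)T_k^i\big)$, with $T_k^i$ the one-round latency when device $k$ is scheduled. *)

theory Defs
  imports "HOL-Probability.Probability"
begin

text \<open>Devices are indexed by k < K; nk k is the number of samples of device k.\<close>

definition total_samples :: "(nat \<Rightarrow> nat) \<Rightarrow> nat \<Rightarrow> real" where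
  "total_samples nk K = (\<Sum>k<K. real (nk k))"

definition global_loss :: "(nat \<Rightarrow> nat) \<Rightarrow> nat \<Rightarrow> (nat \<Rightarrow> 'v \<Rightarrow> real) \<Rightarrow> 'v \<Rightarrow> real" where
  "global_loss nk K Lk w = (\<Sum>k<K. real (nk k) * Lk k w) / total_samples nk K"

text \<open>Global gradient (1/n) sum_k n_k grad L_k(w), with G k w = grad L_k(w)\<close>
definition global_grad :: "(nat \<Rightarrow> nat) \<Rightarrow> nat \<Rightarrow> (nat \<Rightarrow> 'v \<Rightarrow> 'v) \<Rightarrow> 'v \<Rightarrow> 'v::real_vector" where
  "global_grad nk K G w = (1 / total_samples nk K) *\<^sub>R (\<Sum>k<K. real (nk k) *\<^sub>R G k w)"

definition upload_lat :: "real \<Rightarrow> real \<Rightarrow> real \<Rightarrow> real \<Rightarrow> real" where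
  "upload_lat q S B snr = q * S / (B * log 2 (1 + snr))"

text \<open>Scheduling probability p_k^{i*} for device k at model w, given the
  latencies Tk (of round i) and the multiplier lam (= lambda^{i*}).\<close>
definition sched_prob :: "(nat \<Rightarrow> nat) \<Rightarrow> nat \<Rightarrow> (nat \<Rightarrow> 'v \<Rightarrow> 'v::real_normed_vector)
    \<Rightarrow> real \<Rightarrow> (nat \<Rightarrow> real) \<Rightarrow> real \<Rightarrow> 'v \<Rightarrow> nat \<Rightarrow> real" where
  "sched_prob nk K G \<rho> Tk lam w k =
     real (nk k) / total_samples nk K * norm (G k w) * sqrt (\<rho> / ((1 - \<rho>) * Tk k + lam))"

definition sgd_step :: "(nat \<Rightarrow> nat) \<Rightarrow> nat \<Rightarrow> (nat \<Rightarrow> 'v \<Rightarrow> 'v::real_normed_vector)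
    \<Rightarrow> real \<Rightarrow> (nat \<Rightarrow> nat \<Rightarrow> real) \<Rightarrow> (nat \<Rightarrow> 'v \<Rightarrow> real) \<Rightarrow> (nat \<Rightarrow> real)
    \<Rightarrow> nat \<Rightarrow> 'v \<Rightarrow> 'v pmf" where
  "sgd_step nk K G \<rho> T lam \<eta> i w =
     (let p = sched_prob nk K G \<rho> (T i) (lam i w) w in
      map_pmf (\<lambda>X. w - (\<eta> i * real (nk X) / (total_samples nk K * p X)) *\<^sub>R G X w)
              (embed_pmf (\<lambda>X. if X < K then p X else 0)))"

text \<open>wdist ... i is the distribution of the model w^i (i \<ge> 1); w^1 = w1.\<close>
fun wdist :: "(nat \<Rightarrow> nat) \<Rightarrow> nat \<Rightarrow> (nat \<Rightarrow> 'v \<Rightarrow> 'v::real_normed_vector)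
    \<Rightarrow> real \<Rightarrow> (nat \<Rightarrow> nat \<Rightarrow> real) \<Rightarrow> (nat \<Rightarrow> 'v \<Rightarrow> real) \<Rightarrow> (nat \<Rightarrow> real)
    \<Rightarrow> 'v \<Rightarrow> nat \<Rightarrow> 'v pmf" where
  "wdist nk K G \<rho> T lam \<eta> w1 0 = return_pmf w1"
| "wdist nk K G \<rho> T lam \<eta> w1 (Suc i) =
     (if i = 0 then return_pmf w1
      else bind_pmf (wdist nk K G \<rho> T lam \<eta> w1 i) (sgd_step nk K G \<rho> T lam \<eta> i))"

end

theory Submission
  imports Defs
begin

text \<open>
Smoothness bounds the loss after one step by a quadratic in the step; since the
importance-weighted gradient (n_X / (n p_X)) g_X is an unbiased estimate of the
global gradient, the expected first-order term is -eta |grad L|^2, which strong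
convexity (via the Polyak-Lojasiewicz inequality 2 mu (L w - L w*) <= |grad L w|^2)
turns into the contraction factor 1 - 2 mu eta.  For the scheduling probabilities
p*, the second-order term sum_k n_k^2 |g_k|^2 / (n^2 p_k) collapses to
(1/n) sum_k n_k |g_k| sqrt(((1 - rho) T_k + lambda) / rho).  Taking expectations
over the previous rounds and unrolling the resulting affine recursion gives the bound.
\<close>

lemma lipschitz_gradient_quadratic_upper_bound:
  fixes L :: "'v::real_inner \<Rightarrow> real" and gradL :: "'v \<Rightarrow> 'v"
  assumes der: "\<forall>w. (L has_derivative (\<lambda>h. gradL w \<bullet> h)) (at w)"
    and lip: "\<forall>u v. norm (gradL u - gradL v) \<le> ell * norm (u - v)"
  shows "L u \<le> L v + gradL v \<bullet> (u - v) + ell / 2 * (norm (u - v))\<^sup>2"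
proof -
  define d where "d = u - v"
  define \<phi> where "\<phi> s = L (v + s *\<^sub>R d) - s * (gradL v \<bullet> d) - ell / 2 * s\<^sup>2 * (norm d)\<^sup>2"
    for s :: real
  define \<phi>' where "\<phi>' s = gradL (v + s *\<^sub>R d) \<bullet> d - gradL v \<bullet> d - ell * s * (norm d)\<^sup>2"
    for s :: real
  have \<phi>_deriv: "(\<phi> has_real_derivative \<phi>' s) (at s)" for s
  proof -
    have line: "((\<lambda>s. v + s *\<^sub>R d) has_derivative (\<lambda>h. h *\<^sub>R d)) (at s)"
      by (auto intro!: derivative_eq_intros)
    have "((\<lambda>s. L (v + s *\<^sub>R d)) has_derivative (\<lambda>h. gradL (v + s *\<^sub>R d) \<bullet> (h *\<^sub>R d))) (at s)"
      using has_derivative_compose[OF line der[rule_format, of "v + s *\<^sub>R d"]] by simp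
    then have "((\<lambda>s. L (v + s *\<^sub>R d)) has_real_derivative (gradL (v + s *\<^sub>R d) \<bullet> d)) (at s)"
      unfolding has_field_derivative_def
      by (rule has_derivative_eq_rhs) (auto simp: fun_eq_iff)
    then show ?thesis unfolding \<phi>_def \<phi>'_def
      by (auto intro!: derivative_eq_intros)
  qed
  obtain z where z: "0 < z" "z < 1" "\<phi> 1 - \<phi> 0 = (1 - 0) * \<phi>' z"
    using MVT2[of 0 1 \<phi> \<phi>'] \<phi>_deriv by auto
  have "(gradL (v + z *\<^sub>R d) - gradL v) \<bullet> d \<le> norm (gradL (v + z *\<^sub>R d) - gradL v) * norm d"
    by (rule norm_cauchy_schwarz)
  also have "\<dots> \<le> ell * norm (z *\<^sub>R d) * norm d"
    using lip[rule_format, of "v + z *\<^sub>R d" v] by (intro mult_right_mono) auto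
  also have "\<dots> = ell * z * (norm d)\<^sup>2"
    using z by (simp add: power2_eq_square)
  finally have "\<phi>' z \<le> 0"
    unfolding \<phi>'_def by (simp add: inner_diff_left)
  then have "\<phi> 1 \<le> \<phi> 0" using z by simp
  then show ?thesis unfolding \<phi>_def d_def by simp
qed

lemma strongly_convex_gradient_dominance:
  fixes L :: "'v::real_inner \<Rightarrow> real" and gradL :: "'v \<Rightarrow> 'v"
  assumes mu: "\<mu> > 0"
    and convex: "\<forall>u v. L u \<ge> L v + gradL v \<bullet> (u - v) + \<mu> / 2 * (norm (u - v))\<^sup>2"
  shows "2 * \<mu> * (L w - L w') \<le> (norm (gradL w))\<^sup>2"
proof -
  define g where "g = gradL w"
  define d where "d = w' - w"
  have L_w': "L w' \<ge> L w + g \<bullet> d + \<mu> / 2 * (norm d)\<^sup>2"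
    using convex unfolding g_def d_def by blast
  have "0 \<le> (norm (\<mu> *\<^sub>R d + g))\<^sup>2" by simp
  also have "\<dots> = \<mu>\<^sup>2 * (norm d)\<^sup>2 + 2 * \<mu> * (g \<bullet> d) + (norm g)\<^sup>2"
    by (simp only: power2_norm_eq_inner)
      (simp add: inner_add_left inner_add_right inner_commute power2_eq_square algebra_simps)
  finally have square_nonneg: "0 \<le> \<mu>\<^sup>2 * (norm d)\<^sup>2 + 2 * \<mu> * (g \<bullet> d) + (norm g)\<^sup>2" .
  have "2 * \<mu> * (L w - L w') \<le> 2 * \<mu> * (- (g \<bullet> d) - \<mu> / 2 * (norm d)\<^sup>2)"
    using L_w' mu by (intro mult_left_mono) auto
  also have "\<dots> \<le> (norm g)\<^sup>2"
    using square_nonneg by (simp add: power2_eq_square algebra_simps)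
  finally show ?thesis unfolding g_def .
qed

lemma global_loss_has_derivative:
  fixes Lk :: "nat \<Rightarrow> 'v::real_inner \<Rightarrow> real"
  assumes "\<forall>k<K. (Lk k has_derivative (\<lambda>h. G k w \<bullet> h)) (at w)"
  shows "(global_loss nk K Lk has_derivative (\<lambda>h. global_grad nk K G w \<bullet> h)) (at w)"
proof -
  have "((\<lambda>w. inverse (total_samples nk K) * (\<Sum>k<K. real (nk k) * Lk k w)) has_derivative
      (\<lambda>h. inverse (total_samples nk K) * (\<Sum>k<K. real (nk k) * (G k w \<bullet> h)))) (at w)"
    using assms by (intro has_derivative_mult_right has_derivative_sum) auto
  then show ?thesis
    unfolding global_loss_def global_grad_def
    by (simp add: divide_inverse mult.commute inner_sum_left)
qed

lemma importance_sampled_step_le: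
  fixes L :: "'v::real_inner \<Rightarrow> real" and gradL :: "'v \<Rightarrow> 'v" and g :: "'i \<Rightarrow> 'v"
  assumes smooth: "\<forall>u v. L u \<le> L v + gradL v \<bullet> (u - v) + ell / 2 * (norm (u - v))\<^sup>2"
    and unbiased: "gradL w = (\<Sum>k\<in>I. \<beta> k *\<^sub>R g k)"
    and p_pos: "\<forall>k\<in>I. p k > 0" and p_sum: "(\<Sum>k\<in>I. p k) = 1"
  shows "(\<Sum>k\<in>I. p k * L (w - (\<eta> * \<beta> k / p k) *\<^sub>R g k))
    \<le> L w - \<eta> * (norm (gradL w))\<^sup>2 + ell / 2 * \<eta>\<^sup>2 * (\<Sum>k\<in>I. (\<beta> k)\<^sup>2 / p k * (norm (g k))\<^sup>2)"
proof -
  have "p k * L (w - (\<eta> * \<beta> k / p k) *\<^sub>R g k)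
      \<le> p k * L w - \<eta> * \<beta> k * (gradL w \<bullet> g k) + ell / 2 * \<eta>\<^sup>2 * ((\<beta> k)\<^sup>2 / p k * (norm (g k))\<^sup>2)"
    if k: "k \<in> I" for k
  proof -
    define a where "a = \<eta> * \<beta> k / p k"
    have pk: "p k > 0" using p_pos k by auto
    have "p k * L (w - a *\<^sub>R g k)
        \<le> p k * (L w + gradL w \<bullet> (- (a *\<^sub>R g k)) + ell / 2 * (norm (a *\<^sub>R g k))\<^sup>2)"
      using smooth[rule_format, of "w - a *\<^sub>R g k" w] pk by (intro mult_left_mono) auto
    also have "\<dots> = p k * L w - \<eta> * \<beta> k * (gradL w \<bullet> g k)
        + ell / 2 * \<eta>\<^sup>2 * ((\<beta> k)\<^sup>2 / p k * (norm (g k))\<^sup>2)"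
      using pk unfolding a_def by (simp add: power_divide field_simps power2_eq_square)
    finally show ?thesis unfolding a_def .
  qed
  then have "(\<Sum>k\<in>I. p k * L (w - (\<eta> * \<beta> k / p k) *\<^sub>R g k))
      \<le> (\<Sum>k\<in>I. p k * L w - \<eta> * \<beta> k * (gradL w \<bullet> g k)
          + ell / 2 * \<eta>\<^sup>2 * ((\<beta> k)\<^sup>2 / p k * (norm (g k))\<^sup>2))"
    by (rule sum_mono)
  also have "\<dots> = L w - \<eta> * (gradL w \<bullet> gradL w)
      + ell / 2 * \<eta>\<^sup>2 * (\<Sum>k\<in>I. (\<beta> k)\<^sup>2 / p k * (norm (g k))\<^sup>2)"
  proof -
    have "gradL w \<bullet> gradL w = gradL w \<bullet> (\<Sum>k\<in>I. \<beta> k *\<^sub>R g k)"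
      by (simp flip: unbiased)
    also have "\<dots> = (\<Sum>k\<in>I. \<beta> k * (gradL w \<bullet> g k))"
      by (simp add: inner_sum_right)
    finally show ?thesis
      using p_sum
      by (simp add: sum.distrib sum_subtractf sum_distrib_left sum_distrib_right[symmetric]
          mult.assoc)
  qed
  finally show ?thesis by (simp add: power2_norm_eq_inner)
qed

lemma sched_prob_pos:
  assumes "nk k \<ge> 1" "G k w \<noteq> 0" "total_samples nk K > 0" "\<rho> > 0" "(1 - \<rho>) * Tk k + lam > 0"
  shows "sched_prob nk K G \<rho> Tk lam w k > 0"
  using assms unfolding sched_prob_def by (auto intro!: mult_pos_pos)

lemma sum_sched_prob_variance:
  assumes nk_pos: "\<forall>k<K. nk k \<ge> 1" and grad_nonzero: "\<forall>k<K. G k w \<noteq> 0"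
    and n_pos: "total_samples nk K > 0" and rho: "\<rho> > 0"
    and lam_pos: "\<forall>k<K. (1 - \<rho>) * Tk k + lam > 0"
  shows "(\<Sum>k<K. (real (nk k) / total_samples nk K)\<^sup>2 / sched_prob nk K G \<rho> Tk lam w k
      * (norm (G k w))\<^sup>2)
    = (\<Sum>k<K. real (nk k) * norm (G k w) * sqrt (((1 - \<rho>) * Tk k + lam) / \<rho>)) / total_samples nk K"
  unfolding sum_divide_distrib
proof (intro sum.cong refl)
  fix k assume "k \<in> {..<K}"
  then have k: "nk k \<ge> 1" "G k w \<noteq> 0" "(1 - \<rho>) * Tk k + lam > 0"
    using nk_pos grad_nonzero lam_pos by auto
  define D where "D = (1 - \<rho>) * Tk k + lam"
  have "sqrt (D / \<rho>) * sqrt (\<rho> / D) = 1"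
    using k rho unfolding D_def by (simp flip: real_sqrt_mult)
  then have "sqrt (\<rho> / D) = 1 / sqrt (D / \<rho>)"
    by (simp add: eq_divide_eq mult.commute)
  moreover have "sqrt (D / \<rho>) > 0"
    using k rho unfolding D_def by simp
  ultimately show "(real (nk k) / total_samples nk K)\<^sup>2 / sched_prob nk K G \<rho> Tk lam w k
      * (norm (G k w))\<^sup>2
    = real (nk k) * norm (G k w) * sqrt (((1 - \<rho>) * Tk k + lam) / \<rho>) / total_samples nk K"
    using k n_pos unfolding sched_prob_def D_def[symmetric]
    by (simp add: field_simps power2_eq_square)
qed

lemma embed_pmf_lessThan:
  fixes P :: "nat \<Rightarrow> real"
  assumes nonneg: "\<forall>k<K. P k \<ge> 0" and sum_one: "(\<Sum>k<K. P k) = 1"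
  defines "M \<equiv> embed_pmf (\<lambda>k. if k < K then P k else 0)"
  shows "set_pmf M \<subseteq> {..<K}" and "measure_pmf.expectation M h = (\<Sum>k<K. P k * h k)"
proof -
  define Q where "Q = (\<lambda>k. if k < K then P k else 0)"
  have Q_nonneg: "0 \<le> Q k" for k
    using nonneg unfolding Q_def by auto
  have "(\<integral>\<^sup>+k. ennreal (Q k) \<partial>count_space UNIV) = (\<Sum>k<K. ennreal (Q k))"
    by (rule nn_integral_count_space') (auto simp: Q_def)
  also have "\<dots> = ennreal (\<Sum>k<K. Q k)"
    using Q_nonneg by (simp add: sum_ennreal)
  also have "\<dots> = 1"
    using sum_one by (simp add: Q_def)
  finally have pmf_M: "pmf M k = Q k" for k
    unfolding M_def Q_def[symmetric] by (rule pmf_embed_pmf[OF Q_nonneg])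
  then show support: "set_pmf M \<subseteq> {..<K}"
    by (auto simp: set_pmf_eq Q_def)
  have "measure_pmf.expectation M h = (\<Sum>k<K. pmf M k *\<^sub>R h k)"
    using support by (intro integral_measure_pmf) auto
  then show "measure_pmf.expectation M h = (\<Sum>k<K. P k * h k)"
    by (simp add: pmf_M Q_def)
qed

lemma expectation_sgd_step:
  fixes G :: "nat \<Rightarrow> 'v::real_normed_vector \<Rightarrow> 'v" and h :: "'v \<Rightarrow> real"
  assumes "\<forall>k<K. sched_prob nk K G \<rho> (T i) (lam i w) w k \<ge> 0"
    and "(\<Sum>k<K. sched_prob nk K G \<rho> (T i) (lam i w) w k) = 1"
  shows "finite (set_pmf (sgd_step nk K G \<rho> T lam \<eta> i w))"
    and "measure_pmf.expectation (sgd_step nk K G \<rho> T lam \<eta> i w) h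
      = (\<Sum>k<K. sched_prob nk K G \<rho> (T i) (lam i w) w k * h (w -
          (\<eta> i * real (nk k) / (total_samples nk K * sched_prob nk K G \<rho> (T i) (lam i w) w k))
            *\<^sub>R G k w))"
  using embed_pmf_lessThan[OF assms] unfolding sgd_step_def Let_def
  by (auto intro: finite_subset)

lemma expectation_sgd_step_le:
  fixes K :: nat and nk :: "nat \<Rightarrow> nat" and G :: "nat \<Rightarrow> 'v::real_inner \<Rightarrow> 'v" and L :: "'v \<Rightarrow> real"
  defines "n \<equiv> total_samples nk K" and "gradL \<equiv> global_grad nk K G"
  assumes smooth: "\<forall>u v. L u \<le> L v + gradL v \<bullet> (u - v) + ell / 2 * (norm (u - v))\<^sup>2"
    and dominance: "2 * \<mu> * (L w - Ls) \<le> (norm (gradL w))\<^sup>2"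
    and nk_pos: "\<forall>k<K. nk k \<ge> 1" and grad_nonzero: "\<forall>k<K. G k w \<noteq> 0"
    and lam_pos: "\<forall>k<K. (1 - \<rho>) * T i k + lam i w > 0"
    and normalized: "(\<Sum>k<K. sched_prob nk K G \<rho> (T i) (lam i w) w k) = 1"
    and rho: "\<rho> > 0" and eta: "\<eta> i \<ge> 0"
  shows "finite (set_pmf (sgd_step nk K G \<rho> T lam \<eta> i w))"
    and "measure_pmf.expectation (sgd_step nk K G \<rho> T lam \<eta> i w) (\<lambda>v. L v - Ls)
      \<le> (1 - 2 * \<mu> * \<eta> i) * (L w - Ls) + ell / (2 * n) * (\<eta> i)\<^sup>2 *
          (\<Sum>k<K. real (nk k) * norm (G k w) * sqrt (((1 - \<rho>) * T i k + lam i w) / \<rho>))"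
proof -
  define p where "p = sched_prob nk K G \<rho> (T i) (lam i w) w"
  have "K \<noteq> 0" using normalized by (cases "K = 0") auto
  then have n_pos: "n > 0"
    using nk_pos unfolding n_def total_samples_def by (intro sum_pos) auto
  have p_pos: "\<forall>k<K. p k > 0"
    using sched_prob_pos nk_pos grad_nonzero lam_pos rho n_pos unfolding p_def n_def by blast
  then have p_nonneg: "\<forall>k<K. p k \<ge> 0"
    by (simp add: less_imp_le)
  have p_sum: "(\<Sum>k<K. p k) = 1"
    using normalized unfolding p_def .
  note expectation = expectation_sgd_step[where T = T and i = i and lam = lam,
      OF p_nonneg[unfolded p_def] normalized, folded p_def n_def]
  then show "finite (set_pmf (sgd_step nk K G \<rho> T lam \<eta> i w))" by blast
  have unbiased: "gradL w = (\<Sum>k<K. (real (nk k) / n) *\<^sub>R G k w)"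
    unfolding gradL_def global_grad_def n_def by (simp add: scaleR_sum_right)
  have "measure_pmf.expectation (sgd_step nk K G \<rho> T lam \<eta> i w) (\<lambda>v. L v - Ls)
      = (\<Sum>k<K. p k * L (w - (\<eta> i * (real (nk k) / n) / p k) *\<^sub>R G k w)) - Ls"
    using p_sum by (simp add: expectation right_diff_distrib sum_subtractf
        sum_distrib_right[symmetric])
  also have "\<dots> \<le> L w - \<eta> i * (norm (gradL w))\<^sup>2
      + ell / 2 * (\<eta> i)\<^sup>2 * (\<Sum>k<K. (real (nk k) / n)\<^sup>2 / p k * (norm (G k w))\<^sup>2) - Ls"
    using importance_sampled_step_le[OF smooth unbiased, of p "\<eta> i"] p_pos p_sum by simp
  also have "\<dots> \<le> (1 - 2 * \<mu> * \<eta> i) * (L w - Ls) + ell / (2 * n) * (\<eta> i)\<^sup>2 *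
          (\<Sum>k<K. real (nk k) * norm (G k w) * sqrt (((1 - \<rho>) * T i k + lam i w) / \<rho>))"
  proof -
    have "\<eta> i * (2 * \<mu> * (L w - Ls)) \<le> \<eta> i * (norm (gradL w))\<^sup>2"
      using dominance eta by (rule mult_left_mono)
    then show ?thesis
      using sum_sched_prob_variance[where G = G and w = w and Tk = "T i" and lam = "lam i w",
          OF nk_pos grad_nonzero n_pos[unfolded n_def] rho lam_pos]
      unfolding p_def n_def by (simp add: algebra_simps)
  qed
  finally show "measure_pmf.expectation (sgd_step nk K G \<rho> T lam \<eta> i w) (\<lambda>v. L v - Ls)
      \<le> (1 - 2 * \<mu> * \<eta> i) * (L w - Ls) + ell / (2 * n) * (\<eta> i)\<^sup>2 *
          (\<Sum>k<K. real (nk k) * norm (G k w) * sqrt (((1 - \<rho>) * T i k + lam i w) / \<rho>))" .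
qed

lemma expectation_bind_pmf_le:
  fixes f :: "'b \<Rightarrow> real" and g :: "'a \<Rightarrow> real"
  assumes "finite (set_pmf M)"
    and "\<And>x. x \<in> set_pmf M \<Longrightarrow> finite (set_pmf (N x))"
    and "\<And>x. x \<in> set_pmf M \<Longrightarrow> measure_pmf.expectation (N x) f \<le> g x"
  shows "measure_pmf.expectation (bind_pmf M N) f \<le> measure_pmf.expectation M g"
proof -
  have "measure_pmf.expectation (bind_pmf M N) f
      = (\<Sum>x\<in>set_pmf M. pmf M x * measure_pmf.expectation (N x) f)"
    using assms by (subst pmf_expectation_bind[of "set_pmf M"]) auto
  also have "\<dots> \<le> (\<Sum>x\<in>set_pmf M. pmf M x * g x)"
    using assms by (intro sum_mono mult_left_mono) auto
  also have "\<dots> = measure_pmf.expectation M g"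
    using assms by (subst integral_measure_pmf[of "set_pmf M"]) auto
  finally show ?thesis .
qed

lemma finite_set_pmf_wdist:
  assumes "\<And>i w. i \<ge> 1 \<Longrightarrow> w \<in> set_pmf (wdist nk K G \<rho> T lam \<eta> w1 i)
      \<Longrightarrow> finite (set_pmf (sgd_step nk K G \<rho> T lam \<eta> i w))"
  shows "finite (set_pmf (wdist nk K G \<rho> T lam \<eta> w1 i))"
proof (induction i)
  case (Suc i)
  then show ?case using assms by (cases "i = 0") auto
qed simp

lemma expectation_wdist_Suc_le:
  fixes nk :: "nat \<Rightarrow> nat" and K :: nat and G :: "nat \<Rightarrow> 'v::real_normed_vector \<Rightarrow> 'v"
    and \<rho> :: real and T :: "nat \<Rightarrow> nat \<Rightarrow> real" and lam :: "nat \<Rightarrow> 'v \<Rightarrow> real"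
    and \<eta> :: "nat \<Rightarrow> real" and w1 :: 'v
    and f :: "'v \<Rightarrow> real" and h :: "nat \<Rightarrow> 'v \<Rightarrow> real"
  defines "W \<equiv> wdist nk K G \<rho> T lam \<eta> w1"
  assumes step: "\<And>i w. i \<ge> 1 \<Longrightarrow> w \<in> set_pmf (W i) \<Longrightarrow>
      finite (set_pmf (sgd_step nk K G \<rho> T lam \<eta> i w)) \<and>
      measure_pmf.expectation (sgd_step nk K G \<rho> T lam \<eta> i w) f \<le> c i * f w + b i * h i w"
    and i: "i \<ge> 1"
  shows "measure_pmf.expectation (W (Suc i)) f
    \<le> c i * measure_pmf.expectation (W i) f + b i * measure_pmf.expectation (W i) (h i)"
proof -
  have finite_W: "finite (set_pmf (W j))" for j
    using finite_set_pmf_wdist step unfolding W_def by blast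
  have "measure_pmf.expectation (W (Suc i)) f
      \<le> measure_pmf.expectation (W i) (\<lambda>w. c i * f w + b i * h i w)"
    using i finite_W step unfolding W_def by (auto intro!: expectation_bind_pmf_le)
  then show ?thesis
    using finite_W by (simp add: integrable_measure_pmf_finite)
qed

lemma affine_recurrence_unroll_le:
  fixes e b c :: "nat \<Rightarrow> real"
  assumes c_nonneg: "\<And>i. i \<ge> 1 \<Longrightarrow> c i \<ge> 0"
    and recurrence: "\<And>i. i \<ge> 1 \<Longrightarrow> e (Suc i) \<le> c i * e i + b i"
  shows "e (t + 1) \<le> (\<Prod>i=1..t. c i) * e 1 + (\<Sum>i=1..t. (\<Prod>j=i+1..t. c j) * b i)"
proof (induction t)
  case (Suc t)
  have "e (Suc t + 1) \<le> c (Suc t) * e (Suc t) + b (Suc t)"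
    using recurrence by simp
  also have "\<dots> \<le> c (Suc t) * ((\<Prod>i=1..t. c i) * e 1 + (\<Sum>i=1..t. (\<Prod>j=i+1..t. c j) * b i))
      + b (Suc t)"
    using Suc.IH c_nonneg[of "Suc t"] by (simp add: mult_left_mono)
  also have "\<dots> = (\<Prod>i=1..Suc t. c i) * e 1 + (\<Sum>i=1..Suc t. (\<Prod>j=i+1..Suc t. c j) * b i)"
  proof -
    have "(\<Prod>j=i+1..Suc t. c j) = c (Suc t) * (\<Prod>j=i+1..t. c j)" if "i \<le> t" for i
      using that by (simp add: prod.cl_ivl_Suc)
    then have "(\<Sum>i=1..t. (\<Prod>j=i+1..Suc t. c j) * b i)
        = c (Suc t) * (\<Sum>i=1..t. (\<Prod>j=i+1..t. c j) * b i)"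
      by (simp add: sum_distrib_left ac_simps)
    then show ?thesis by (simp add: prod.cl_ivl_Suc algebra_simps)
  qed
  finally show ?case .
qed simp

theorem theorem2:
  fixes K :: nat and nk :: "nat \<Rightarrow> nat"
    and Lk :: "nat \<Rightarrow> 'v::euclidean_space \<Rightarrow> real" and G :: "nat \<Rightarrow> 'v \<Rightarrow> 'v"
    and wstar w1 :: 'v and ell \<mu> \<rho> q S B :: real
    and snr :: "nat \<Rightarrow> nat \<Rightarrow> real" and lam :: "nat \<Rightarrow> 'v \<Rightarrow> real"
    and \<eta> :: "nat \<Rightarrow> real" and t :: nat
  defines "L \<equiv> global_loss nk K Lk"
    and "gradL \<equiv> global_grad nk K G"
    and "n \<equiv> total_samples nk K"
    and "T \<equiv> (\<lambda>i k. upload_lat q S B (snr i k))"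
  assumes K_pos: "K \<ge> 1"
    and nk_pos: "\<forall>k<K. nk k \<ge> 1"
    and grad: "\<forall>k<K. \<forall>w. (Lk k has_derivative (\<lambda>h. G k w \<bullet> h)) (at w)"
    and lipschitz: "ell > 0" "\<forall>u v. norm (gradL u - gradL v) \<le> ell * norm (u - v)"
    and strongly_convex: "\<mu> > 0"
      "\<forall>u v. L u \<ge> L v + gradL v \<bullet> (u - v) + \<mu> / 2 * (norm (u - v))\<^sup>2"
    and optimal: "\<forall>w. L wstar \<le> L w"
    and rho: "0 < \<rho>" "\<rho> \<le> 1"
    and params: "q > 0" "S > 0" "B > 0" "\<forall>i k. snr i k > 0"
    and lam_choice: "\<forall>i\<ge>1. \<forall>w. (\<forall>k<K. G k w \<noteq> 0) \<longrightarrow>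
        (\<forall>k<K. (1 - \<rho>) * T i k + lam i w > 0) \<and>
        (\<Sum>k<K. sched_prob nk K G \<rho> (T i) (lam i w) w k) = 1"
    and grad_nonzero: "\<forall>i\<ge>1. \<forall>w\<in>set_pmf (wdist nk K G \<rho> T lam \<eta> w1 i). \<forall>k<K. G k w \<noteq> 0"
    and eta: "\<forall>i\<ge>1. 0 < \<eta> i \<and> \<eta> i < 1 / (2 * \<mu>)"
    and t_pos: "t \<ge> 1"
  shows "measure_pmf.expectation (wdist nk K G \<rho> T lam \<eta> w1 (t + 1)) (\<lambda>w. L w - L wstar)
    \<le> (\<Prod>i=1..t. 1 - 2 * \<mu> * \<eta> i) *
        measure_pmf.expectation (wdist nk K G \<rho> T lam \<eta> w1 1) (\<lambda>w. L w - L wstar)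
      + ell / (2 * n) * (\<Sum>i=1..t. (\<Prod>j=i+1..t. 1 - 2 * \<mu> * \<eta> j) * (\<eta> i)\<^sup>2 *
          measure_pmf.expectation (wdist nk K G \<rho> T lam \<eta> w1 i)
            (\<lambda>w. \<Sum>k<K. real (nk k) * norm (G k w) * sqrt (((1 - \<rho>) * T i k + lam i w) / \<rho>)))"
proof -
  define W where "W = wdist nk K G \<rho> T lam \<eta> w1"
  define f where "f w = L w - L wstar" for w
  define C where "C i w = (\<Sum>k<K. real (nk k) * norm (G k w) * sqrt (((1 - \<rho>) * T i k + lam i w) / \<rho>))"
    for i w
  have smooth: "\<forall>u v. L u \<le> L v + gradL v \<bullet> (u - v) + ell / 2 * (norm (u - v))\<^sup>2"
    using lipschitz_gradient_quadratic_upper_bound global_loss_has_derivative grad lipschitz(2)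
    unfolding L_def gradL_def by blast
  note step = expectation_sgd_step_le[OF smooth[unfolded gradL_def]
      strongly_convex_gradient_dominance[OF strongly_convex, unfolded gradL_def] nk_pos,
      folded n_def]
  have step_W: "finite (set_pmf (sgd_step nk K G \<rho> T lam \<eta> i w)) \<and>
      measure_pmf.expectation (sgd_step nk K G \<rho> T lam \<eta> i w) f
        \<le> (1 - 2 * \<mu> * \<eta> i) * f w + ell / (2 * n) * (\<eta> i)\<^sup>2 * C i w"
    if "i \<ge> 1" "w \<in> set_pmf (W i)" for i w
    using step[of w] lam_choice grad_nonzero eta rho that unfolding W_def f_def C_def
    by (simp add: less_imp_le)
  have "measure_pmf.expectation (W (t + 1)) f
      \<le> (\<Prod>i=1..t. 1 - 2 * \<mu> * \<eta> i) * measure_pmf.expectation (W 1) f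
        + (\<Sum>i=1..t. (\<Prod>j=i+1..t. 1 - 2 * \<mu> * \<eta> j) *
            (ell / (2 * n) * (\<eta> i)\<^sup>2 * measure_pmf.expectation (W i) (C i)))"
  proof (rule affine_recurrence_unroll_le)
    show "1 - 2 * \<mu> * \<eta> i \<ge> 0" if "i \<ge> 1" for i
      using eta that strongly_convex(1) by (auto simp: field_simps)
    show "measure_pmf.expectation (W (Suc i)) f
        \<le> (1 - 2 * \<mu> * \<eta> i) * measure_pmf.expectation (W i) f
          + ell / (2 * n) * (\<eta> i)\<^sup>2 * measure_pmf.expectation (W i) (C i)" if "i \<ge> 1" for i
      using expectation_wdist_Suc_le[OF step_W[unfolded W_def] that] unfolding W_def .
  qed
  then show ?thesis
    unfolding W_def f_def C_def by (simp add: sum_distrib_left ac_simps)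
qed

end
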